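(* Let $g>0$ and $\chi>0$ be constants, and let $h(t,x)>0$, $u(t,x)$ be smooth solutions of $$h_t+(hu)_x=0,\qquad (hu)_t+\Big(hu^2+g\frac{h^2}{2}-\chi\ddot\tau\Big)_x=0,$$ where $\tau=1/h$ and for any function $f(t,x)$, $\dot f=f_t+uf_x$ (so $\ddot\tau$ is the second such material derivative of $\tau$). Then, with $q=hu$, the energy conservation law $$\left(h\Big(\frac{u^2}{2}+g\frac{h}{2}+\frac{\chi\dot\tau^2}{2}\Big)\right)_t+\left(q\Big(\frac{u^2}{2}+g\frac{h}{2}+\frac{\chi\dot\tau^2}{2}\Big)+\Big(g\frac{h^2}{2}-\chi\ddot\tau\Big)u\right)_x=0$$ holds.
   Context: This is the "simplified geometrical Green–Naghdi" system for section-averaged depth $h$ and Favre-averaged velocity $u$ in a prismatic channel, with $\chi$ a positive geometric dispersion coefficient determined by the channel cross-section. *)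

theory Defs
  imports "HOL-Analysis.Analysis"
begin

definition pt :: "(real \<Rightarrow> real \<Rightarrow> real) \<Rightarrow> real \<Rightarrow> real \<Rightarrow> real" where
  "pt f = (\<lambda>t x. deriv (\<lambda>s. f s x) t)"

definition px :: "(real \<Rightarrow> real \<Rightarrow> real) \<Rightarrow> real \<Rightarrow> real \<Rightarrow> real" where
  "px f = (\<lambda>t x. deriv (\<lambda>y. f t y) x)"

definition matd :: "(real \<Rightarrow> real \<Rightarrow> real) \<Rightarrow> (real \<Rightarrow> real \<Rightarrow> real) \<Rightarrow> real \<Rightarrow> real \<Rightarrow> real" where
  "matd u f = (\<lambda>t x. pt f t x + u t x * px f t x)"

fun iterp :: "bool list \<Rightarrow> (real \<Rightarrow> real \<Rightarrow> real) \<Rightarrow> real \<Rightarrow> real \<Rightarrow> real" where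
  "iterp [] f = f"
| "iterp (b # bs) f = (if b then pt else px) (iterp bs f)"

definition smooth_on :: "(real \<times> real) set \<Rightarrow> (real \<Rightarrow> real \<Rightarrow> real) \<Rightarrow> bool" where
  "smooth_on U f \<longleftrightarrow> (\<forall>ds. \<forall>p\<in>U. (\<lambda>q. iterp ds f (fst q) (snd q)) differentiable (at p))"

end

(*
  Write f' for the material derivative f_t + u f_x, \<tau> = 1/h and w = \<tau>'. Mass conservation
  says h' = -h u_x, hence h w = u_x. By the product rule alone, the energy residual equals

    (\<chi> w^2/2 + g h - u^2/2) (mass residual) + u (momentum residual)
      + \<chi> h w (w' - \<tau>'') + \<chi> \<tau>'' (h w - u_x),

  and every term vanishes. Smoothness of h and u enters only to make \<tau>'' differentiable;
  it propagates through sums, products, reciprocals and partial derivatives by induction on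
  the number of derivatives taken.
*)

theory Submission
  imports Defs
begin

definition pdiff :: "bool \<Rightarrow> (real \<Rightarrow> real \<Rightarrow> real) \<Rightarrow> real \<Rightarrow> real \<Rightarrow> real" where
  "pdiff b = (if b then pt else px)"

lemma pdiff_True [simp]: "pdiff True = pt"
  and pdiff_False [simp]: "pdiff False = px"
  by (simp_all add: pdiff_def)

lemma iterp_append_single: "iterp (bs @ [b]) f = iterp bs (pdiff b f)"
  by (induction bs) (simp_all add: pdiff_def)

lemma has_real_derivative_pt:
  assumes "case_prod f differentiable (at (t, x))"
  shows "((\<lambda>s. f s x) has_real_derivative pt f t x) (at t)"
proof -
  have "(case_prod f \<circ> (\<lambda>s. (s, x))) differentiable (at t)"
    using assms by (intro differentiable_chain_at) (auto intro!: derivative_intros)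
  then show ?thesis
    by (simp add: o_def pt_def DERIV_deriv_iff_real_differentiable)
qed

lemma has_real_derivative_px:
  assumes "case_prod f differentiable (at (t, x))"
  shows "((\<lambda>y. f t y) has_real_derivative px f t x) (at x)"
proof -
  have "(case_prod f \<circ> (\<lambda>y. (t, y))) differentiable (at x)"
    using assms by (intro differentiable_chain_at) (auto intro!: derivative_intros)
  then show ?thesis
    by (simp add: o_def px_def DERIV_deriv_iff_real_differentiable)
qed

lemma pt_eqI: "((\<lambda>s. f s x) has_real_derivative D) (at t) \<Longrightarrow> pt f t x = D"
  unfolding pt_def by (rule DERIV_imp_deriv)

lemma px_eqI: "((\<lambda>y. f t y) has_real_derivative D) (at x) \<Longrightarrow> px f t x = D"
  unfolding px_def by (rule DERIV_imp_deriv)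

lemma pdiff_const [simp]: "pdiff b (\<lambda>t x. c) = (\<lambda>t x. 0)"
  by (cases b) (simp_all add: pt_def px_def)

lemma pdiff_add:
  assumes "case_prod f differentiable (at (t, x))" "case_prod g differentiable (at (t, x))"
  shows "pdiff b (\<lambda>t x. f t x + g t x) t x = pdiff b f t x + pdiff b g t x"
  using assms by (cases b) (auto intro!: pt_eqI px_eqI derivative_eq_intros
      has_real_derivative_pt has_real_derivative_px)

lemma pdiff_mult:
  assumes "case_prod f differentiable (at (t, x))" "case_prod g differentiable (at (t, x))"
  shows "pdiff b (\<lambda>t x. f t x * g t x) t x = pdiff b f t x * g t x + f t x * pdiff b g t x"
  using assms by (cases b) (auto intro!: pt_eqI px_eqI derivative_eq_intros
      has_real_derivative_pt has_real_derivative_px)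

lemma pdiff_inverse:
  assumes "case_prod f differentiable (at (t, x))" "f t x \<noteq> 0"
  shows "pdiff b (\<lambda>t x. 1 / f t x) t x = - pdiff b f t x / (f t x)\<^sup>2"
  using assms by (cases b) (auto intro!: pt_eqI px_eqI derivative_eq_intros
      has_real_derivative_pt has_real_derivative_px simp: power2_eq_square)

lemma pdiff_cong_open:
  assumes "open U" "\<And>t x. (t, x) \<in> U \<Longrightarrow> f t x = g t x" "(t, x) \<in> U"
  shows "pdiff b f t x = pdiff b g t x"
proof (cases b)
  case True
  have "eventually (\<lambda>s. (s, x) \<in> U) (nhds t)"
    by (rule topological_tendstoD[where l = "(t, x)"])
      (use assms in \<open>auto intro!: tendsto_intros filterlim_ident simp del: tendsto_ident_at\<close>)
  then have "eventually (\<lambda>s. f s x = g s x) (nhds t)"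
    by (rule eventually_mono) (use assms(2) in blast)
  then show ?thesis
    using True by (simp add: pt_def deriv_cong_ev)
next
  case False
  have "eventually (\<lambda>y. (t, y) \<in> U) (nhds x)"
    by (rule topological_tendstoD[where l = "(t, x)"])
      (use assms in \<open>auto intro!: tendsto_intros filterlim_ident simp del: tendsto_ident_at\<close>)
  then have "eventually (\<lambda>y. f t y = g t y) (nhds x)"
    by (rule eventually_mono) (use assms(2) in blast)
  then show ?thesis
    using False by (simp add: px_def deriv_cong_ev)
qed

definition smooth_upto :: "nat \<Rightarrow> (real \<times> real) set \<Rightarrow> (real \<Rightarrow> real \<Rightarrow> real) \<Rightarrow> bool" where
  "smooth_upto n U f \<longleftrightarrow>
     (\<forall>bs. length bs \<le> n \<longrightarrow> (\<forall>p\<in>U. case_prod (iterp bs f) differentiable (at p)))"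

lemma smooth_on_iff_smooth_upto: "smooth_on U f \<longleftrightarrow> (\<forall>n. smooth_upto n U f)"
  unfolding smooth_on_def smooth_upto_def case_prod_unfold by blast

lemma smooth_upto_le: "m \<le> n \<Longrightarrow> smooth_upto n U f \<Longrightarrow> smooth_upto m U f"
  unfolding smooth_upto_def by auto

lemma smooth_upto_0: "smooth_upto 0 U f \<longleftrightarrow> (\<forall>p\<in>U. case_prod f differentiable (at p))"
  by (simp add: smooth_upto_def)

lemma smooth_upto_Suc:
  "smooth_upto (Suc n) U f \<longleftrightarrow> smooth_upto 0 U f \<and> (\<forall>b. smooth_upto n U (pdiff b f))"
  (is "?lhs \<longleftrightarrow> ?rhs")
proof
  assume ?lhs
  then have "smooth_upto 0 U f" by (rule smooth_upto_le[rotated]) simp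
  moreover have "smooth_upto n U (pdiff b f)" for b
    using \<open>?lhs\<close> unfolding smooth_upto_def
    by (metis iterp_append_single length_append_singleton not_less_eq_eq)
  ultimately show ?rhs by blast
next
  assume ?rhs
  show ?lhs
    unfolding smooth_upto_def
  proof (intro allI impI)
    fix bs :: "bool list" assume "length bs \<le> Suc n"
    then show "\<forall>p\<in>U. case_prod (iterp bs f) differentiable (at p)"
      using \<open>?rhs\<close> by (cases bs rule: rev_cases) (auto simp: smooth_upto_def iterp_append_single)
  qed
qed

lemma smooth_upto_cong_open:
  assumes "open U" "\<And>t x. (t, x) \<in> U \<Longrightarrow> f t x = g t x" "smooth_upto n U f"
  shows "smooth_upto n U g"
  using assms(2,3)
proof (induction n arbitrary: f g)
  case 0
  have "case_prod g differentiable (at p)" if "p \<in> U" for p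
  proof -
    obtain D where "(case_prod f has_derivative D) (at p)"
      using 0 \<open>p \<in> U\<close> by (auto simp: smooth_upto_0 differentiable_def)
    then have "(case_prod g has_derivative D) (at p)"
      by (rule has_derivative_transform_within_open[OF _ assms(1) \<open>p \<in> U\<close>]) (use 0 in auto)
    then show ?thesis by (auto simp: differentiable_def)
  qed
  then show ?case by (simp add: smooth_upto_0)
next
  case (Suc n)
  have "smooth_upto n U (pdiff b g)" for b
    using Suc.IH[of "pdiff b f" "pdiff b g"] Suc.prems pdiff_cong_open[OF assms(1) Suc.prems(1)]
    by (simp add: smooth_upto_Suc)
  moreover have "smooth_upto 0 U g"
    using Suc.IH[OF Suc.prems(1) smooth_upto_le[OF _ Suc.prems(2)]] smooth_upto_le[of 0 n] by simp
  ultimately show ?case by (simp add: smooth_upto_Suc)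
qed

lemma smooth_upto_const: "smooth_upto n U (\<lambda>t x. c)"
  by (induction n arbitrary: c) (simp_all add: smooth_upto_0 smooth_upto_Suc case_prod_unfold)

lemma smooth_upto_add:
  assumes "open U"
  shows "smooth_upto n U f \<Longrightarrow> smooth_upto n U g \<Longrightarrow> smooth_upto n U (\<lambda>t x. f t x + g t x)"
proof (induction n arbitrary: f g)
  case 0
  then show ?case by (auto simp: smooth_upto_0 case_prod_unfold intro: differentiable_add)
next
  case (Suc n)
  have "smooth_upto n U (pdiff b (\<lambda>t x. f t x + g t x))" for b
  proof (rule smooth_upto_cong_open[OF assms])
    show "smooth_upto n U (\<lambda>t x. pdiff b f t x + pdiff b g t x)"
      using Suc by (simp add: smooth_upto_Suc)
    show "pdiff b f t x + pdiff b g t x = pdiff b (\<lambda>t x. f t x + g t x) t x" if "(t, x) \<in> U" for t x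
      using Suc.prems that by (simp add: smooth_upto_Suc smooth_upto_0 pdiff_add)
  qed
  then show ?case
    using Suc.prems by (auto simp: smooth_upto_Suc smooth_upto_0 case_prod_unfold
        intro: differentiable_add)
qed

lemma smooth_upto_mult:
  assumes "open U"
  shows "smooth_upto n U f \<Longrightarrow> smooth_upto n U g \<Longrightarrow> smooth_upto n U (\<lambda>t x. f t x * g t x)"
proof (induction n arbitrary: f g)
  case 0
  then show ?case by (auto simp: smooth_upto_0 case_prod_unfold intro: differentiable_mult)
next
  case (Suc n)
  have f: "smooth_upto n U f" and g: "smooth_upto n U g"
    using Suc.prems smooth_upto_le[of n "Suc n"] by auto
  have "smooth_upto n U (pdiff b (\<lambda>t x. f t x * g t x))" for b
  proof (rule smooth_upto_cong_open[OF assms])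
    show "smooth_upto n U (\<lambda>t x. pdiff b f t x * g t x + f t x * pdiff b g t x)"
      using Suc f g by (intro smooth_upto_add[OF assms]) (simp_all add: smooth_upto_Suc)
    show "pdiff b f t x * g t x + f t x * pdiff b g t x = pdiff b (\<lambda>t x. f t x * g t x) t x"
      if "(t, x) \<in> U" for t x
      using Suc.prems that by (simp add: smooth_upto_Suc smooth_upto_0 pdiff_mult)
  qed
  then show ?case
    using Suc.prems by (auto simp: smooth_upto_Suc smooth_upto_0 case_prod_unfold
        intro: differentiable_mult)
qed

lemma smooth_upto_inverse:
  assumes "open U" "\<And>t x. (t, x) \<in> U \<Longrightarrow> f t x \<noteq> 0"
  shows "smooth_upto n U f \<Longrightarrow> smooth_upto n U (\<lambda>t x. 1 / f t x)"
proof (induction n)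
  case 0
  then show ?case
    using assms(2) by (auto simp: smooth_upto_0 case_prod_unfold intro!: differentiable_divide)
next
  case (Suc n)
  have inv: "smooth_upto n U (\<lambda>t x. 1 / f t x)"
    using Suc smooth_upto_le[of n "Suc n"] by auto
  have "smooth_upto n U (pdiff b (\<lambda>t x. 1 / f t x))" for b
  proof (rule smooth_upto_cong_open[OF assms(1)])
    show "smooth_upto n U (\<lambda>t x. - 1 * pdiff b f t x * (1 / f t x) * (1 / f t x))"
      using Suc.prems inv
      by (intro smooth_upto_mult[OF assms(1)] smooth_upto_const) (simp_all add: smooth_upto_Suc)
    show "- 1 * pdiff b f t x * (1 / f t x) * (1 / f t x) = pdiff b (\<lambda>t x. 1 / f t x) t x"
      if "(t, x) \<in> U" for t x
      using Suc.prems that assms(2)[OF that]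
      by (simp add: smooth_upto_Suc smooth_upto_0 pdiff_inverse power2_eq_square)
  qed
  then show ?case
    using Suc.prems assms(2) by (auto simp: smooth_upto_Suc smooth_upto_0 case_prod_unfold
        intro!: differentiable_divide)
qed

lemma smooth_on_imp_differentiable: "smooth_on U f \<Longrightarrow> p \<in> U \<Longrightarrow> case_prod f differentiable (at p)"
  by (metis smooth_on_iff_smooth_upto smooth_upto_0)

lemma smooth_on_inverse:
  "open U \<Longrightarrow> (\<And>t x. (t, x) \<in> U \<Longrightarrow> f t x \<noteq> 0) \<Longrightarrow> smooth_on U f \<Longrightarrow>
    smooth_on U (\<lambda>t x. 1 / f t x)"
  by (simp add: smooth_on_iff_smooth_upto smooth_upto_inverse)

lemma smooth_on_matd:
  assumes "open U" "smooth_on U u" "smooth_on U f"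
  shows "smooth_on U (matd u f)"
  unfolding smooth_on_iff_smooth_upto
proof
  fix n
  have "smooth_upto n U (pt f)" "smooth_upto n U (px f)"
    using assms(3) by (metis smooth_on_iff_smooth_upto smooth_upto_Suc pdiff_True pdiff_False)+
  then show "smooth_upto n U (matd u f)"
    using assms(1,2) unfolding matd_def smooth_on_iff_smooth_upto
    by (intro smooth_upto_add smooth_upto_mult) auto
qed

lemma matd_inverse_of_mass_conservation:
  assumes "case_prod h differentiable (at (t, x))" "case_prod u differentiable (at (t, x))"
    and "h t x \<noteq> 0" and "pt h t x + px (\<lambda>t x. h t x * u t x) t x = 0"
  shows "h t x * matd u (\<lambda>t x. 1 / h t x) t x = px u t x"
proof -
  have "matd u (\<lambda>t x. 1 / h t x) t x = - matd u h t x / (h t x)\<^sup>2"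
    using pdiff_inverse[OF assms(1,3), of True] pdiff_inverse[OF assms(1,3), of False]
    by (simp add: matd_def diff_divide_distrib add_divide_distrib)
  also have "matd u h t x = - h t x * px u t x"
    using assms(4) pdiff_mult[OF assms(1,2), of False] by (simp add: matd_def algebra_simps)
  finally show ?thesis
    using assms(3) by (simp add: power2_eq_square)
qed

lemma energy_balance_identity:
  fixes g chi :: real and h u w W :: "real \<Rightarrow> real \<Rightarrow> real"
  assumes h: "case_prod h differentiable (at (t, x))" and u: "case_prod u differentiable (at (t, x))"
    and w: "case_prod w differentiable (at (t, x))" and W: "case_prod W differentiable (at (t, x))"
  shows "pt (\<lambda>t x. h t x * ((u t x)\<^sup>2 / 2 + g * h t x / 2 + chi * (w t x)\<^sup>2 / 2)) t x
       + px (\<lambda>t x. (h t x * u t x) * ((u t x)\<^sup>2 / 2 + g * h t x / 2 + chi * (w t x)\<^sup>2 / 2)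
                  + (g * (h t x)\<^sup>2 / 2 - chi * W t x) * u t x) t x
     = (chi * (w t x)\<^sup>2 / 2 + g * h t x - (u t x)\<^sup>2 / 2)
         * (pt h t x + px (\<lambda>t x. h t x * u t x) t x)
       + u t x * (pt (\<lambda>t x. h t x * u t x) t x
           + px (\<lambda>t x. h t x * (u t x)\<^sup>2 + g * (h t x)\<^sup>2 / 2 - chi * W t x) t x)
       + chi * h t x * w t x * (matd u w t x - W t x)
       + chi * W t x * (h t x * w t x - px u t x)"
proof -
  note derivs = has_real_derivative_pt[OF h] has_real_derivative_px[OF h]
    has_real_derivative_pt[OF u] has_real_derivative_px[OF u]
    has_real_derivative_pt[OF w] has_real_derivative_px[OF w] has_real_derivative_px[OF W]
  have energy_t: "pt (\<lambda>t x. h t x * ((u t x)\<^sup>2 / 2 + g * h t x / 2 + chi * (w t x)\<^sup>2 / 2)) t x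
      = pt h t x * ((u t x)\<^sup>2 / 2 + g * h t x / 2 + chi * (w t x)\<^sup>2 / 2)
        + h t x * (u t x * pt u t x + g * pt h t x / 2 + chi * w t x * pt w t x)"
    by (rule pt_eqI) (auto intro!: derivative_eq_intros derivs)
  have energy_flux_x: "px (\<lambda>t x. (h t x * u t x) * ((u t x)\<^sup>2 / 2 + g * h t x / 2 + chi * (w t x)\<^sup>2 / 2)
                  + (g * (h t x)\<^sup>2 / 2 - chi * W t x) * u t x) t x
      = (px h t x * u t x + h t x * px u t x) * ((u t x)\<^sup>2 / 2 + g * h t x / 2 + chi * (w t x)\<^sup>2 / 2)
        + (h t x * u t x) * (u t x * px u t x + g * px h t x / 2 + chi * w t x * px w t x)
        + (g * h t x * px h t x - chi * px W t x) * u t x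
        + (g * (h t x)\<^sup>2 / 2 - chi * W t x) * px u t x"
    by (rule px_eqI) (auto intro!: derivative_eq_intros derivs simp: field_simps power2_eq_square)
  have mass_flux_x: "px (\<lambda>t x. h t x * u t x) t x = px h t x * u t x + h t x * px u t x"
    by (rule px_eqI) (auto intro!: derivative_eq_intros derivs)
  have momentum_t: "pt (\<lambda>t x. h t x * u t x) t x = pt h t x * u t x + h t x * pt u t x"
    by (rule pt_eqI) (auto intro!: derivative_eq_intros derivs)
  have momentum_flux_x: "px (\<lambda>t x. h t x * (u t x)\<^sup>2 + g * (h t x)\<^sup>2 / 2 - chi * W t x) t x
      = px h t x * (u t x)\<^sup>2 + h t x * (2 * u t x * px u t x) + g * h t x * px h t x - chi * px W t x"
    by (rule px_eqI) (auto intro!: derivative_eq_intros derivs)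
  show ?thesis
    unfolding energy_t energy_flux_x mass_flux_x momentum_t momentum_flux_x matd_def
    by (simp add: field_simps power2_eq_square)
qed

theorem mainTheorem4:
  fixes g chi :: real and h u :: "real \<Rightarrow> real \<Rightarrow> real" and U :: "(real \<times> real) set"
  assumes "g > 0" and "chi > 0"
    and "open U"
    and "smooth_on U h" and "smooth_on U u"
    and "\<And>t x. (t, x) \<in> U \<Longrightarrow> h t x > 0"
    and "\<And>t x. (t, x) \<in> U \<Longrightarrow>
           pt h t x + px (\<lambda>t x. h t x * u t x) t x = 0"
    and "\<And>t x. (t, x) \<in> U \<Longrightarrow>
           pt (\<lambda>t x. h t x * u t x) t x
           + px (\<lambda>t x. h t x * (u t x)\<^sup>2 + g * (h t x)\<^sup>2 / 2
                      - chi * matd u (matd u (\<lambda>t x. 1 / h t x)) t x) t x = 0"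
  shows "\<And>t x. (t, x) \<in> U \<Longrightarrow>
           pt (\<lambda>t x. h t x * ((u t x)\<^sup>2 / 2 + g * h t x / 2
                      + chi * (matd u (\<lambda>t x. 1 / h t x) t x)\<^sup>2 / 2)) t x
           + px (\<lambda>t x. (h t x * u t x) * ((u t x)\<^sup>2 / 2 + g * h t x / 2
                      + chi * (matd u (\<lambda>t x. 1 / h t x) t x)\<^sup>2 / 2)
                    + (g * (h t x)\<^sup>2 / 2 - chi * matd u (matd u (\<lambda>t x. 1 / h t x)) t x) * u t x) t x
           = 0"
proof -
  fix t x assume tx: "(t, x) \<in> U"
  define w where "w = matd u (\<lambda>t x. 1 / h t x)"
  have h_nonzero: "\<And>t x. (t, x) \<in> U \<Longrightarrow> h t x \<noteq> 0"
    using assms(6) by (metis less_irrefl)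
  have "smooth_on U w"
    unfolding w_def using assms(3-5) h_nonzero by (intro smooth_on_matd smooth_on_inverse)
  then have "smooth_on U (matd u w)"
    using assms(3,5) by (intro smooth_on_matd)
  with \<open>smooth_on U w\<close> assms(4,5) tx
  have "case_prod h differentiable (at (t, x))" "case_prod u differentiable (at (t, x))"
    "case_prod w differentiable (at (t, x))" "case_prod (matd u w) differentiable (at (t, x))"
    by (simp_all add: smooth_on_imp_differentiable)
  moreover have "h t x * w t x = px u t x"
    unfolding w_def using calculation assms(7)[OF tx] h_nonzero[OF tx]
    by (intro matd_inverse_of_mass_conservation)
  ultimately show "?thesis t x"
    using energy_balance_identity[of h t x u w "matd u w" g chi] assms(7,8)[OF tx]
    by (simp add: w_def)
qed

end
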